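(* Let $\lambda_1,\lambda_2,\lambda_1',\lambda_2',\sigma_1,\sigma_2,\sigma_1',\sigma_2'\in\mathbb{C}^*$ and $\eta_1,\eta_2,\eta_1',\eta_2'\in\mathbb{C}$ with $\lambda_1\neq\lambda_2$ and $\lambda_1'\neq\lambda_2'$. Then the irreducible $\mathcal{G}$-modules $\Omega(\lambda_1,\eta_1,\sigma_1,0)\otimes\Omega(\lambda_2,\eta_2,0,\sigma_2)$ and $\Omega(\lambda_1',\eta_1',\sigma_1',0)\otimes\Omega(\lambda_2',\eta_2',0,\sigma_2')$ are isomorphic if and only if $(\lambda_1,\eta_1,\sigma_1)=(\lambda_1',\eta_1',\sigma_1')$ and $(\lambda_2,\eta_2,\sigma_2)=(\lambda_2',\eta_2',\sigma_2')$.
   Context: The planar Galilean conformal algebra $\mathcal{G}$ is the complex Lie algebra with basis $\{L_m,H_m,I_m,J_m\mid m\in\mathbb{Z}\}$ and brackets $[L_m,L_n]=(n-m)L_{m+n}$, $[L_m,H_n]=nH_{m+n}$, $[L_m,I_n]=(n-m)I_{m+n}$, $[L_m,J_n]=(n-m)J_{m+n}$, $[H_m,I_n]=I_{m+n}$, $[H_m,J_n]=-J_{m+n}$, and $[H_m,H_n]=[I_m,I_n]=[J_m,J_n]=[I_m,J_n]=0$ for all $m,n\in\mathbb{Z}$. For $\lambda,\sigma\in\mathbb{C}^*$, $\eta\in\mathbb{C}$, the module $\Omega(\lambda,\eta,\sigma,0)$ is $\mathbb{C}[X,Y]$ with $L_m f(X,Y)=\lambda^m(Y-mX+m\eta)f(X,Y-m)$,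 $H_m f(X,Y)=\lambda^m X f(X,Y-m)$, $I_m f(X,Y)=\lambda^m\sigma f(X-1,Y-m)$, $J_m f(X,Y)=0$. The module $\Omega(\lambda,\eta,0,\sigma)$ is $\mathbb{C}[S,T]$ with $L_m f(S,T)=\lambda^m(T+mS+m\eta)f(S,T-m)$, $H_m f(S,T)=\lambda^m S f(S,T-m)$, $I_m f(S,T)=0$, $J_m f(S,T)=\lambda^m\sigma f(S+1,T-m)$. The tensor product of $\mathcal{G}$-modules has action $x(v\otimes w)=xv\otimes w+v\otimes xw$. (When $\lambda_1\neq\lambda_2$ these tensor products are irreducible.) *)

theory Defs
  imports "HOL-Computational_Algebra.Polynomial"
begin

text \<open>The polynomial ring C[X,Y,S,T], realised as nested univariate polynomials:
  innermost variable X, then Y, then S, outermost variable T.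
  The tensor product C[X,Y] (x) C[S,T] is identified with C[X,Y,S,T] via f (x) g |-> f g.\<close>

type_synonym mpoly4 = "complex poly poly poly poly"

definition cst :: "complex \<Rightarrow> mpoly4" where
  "cst c = [:[:[:[:c:]:]:]:]"

definition varX :: mpoly4 where "varX = [:[:[:[:0, 1:]:]:]:]"
definition varY :: mpoly4 where "varY = [:[:[:0, 1:]:]:]"
definition varS :: mpoly4 where "varS = [:[:0, 1:]:]"
definition varT :: mpoly4 where "varT = [:0, 1:]"

definition shiftX :: "complex \<Rightarrow> mpoly4 \<Rightarrow> mpoly4" where
  "shiftX a p = map_poly (map_poly (map_poly (\<lambda>q. pcompose q [:a, 1:]))) p"
definition shiftY :: "complex \<Rightarrow> mpoly4 \<Rightarrow> mpoly4" where
  "shiftY a p = map_poly (map_poly (\<lambda>q. pcompose q [:[:a:], 1:])) p"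
definition shiftS :: "complex \<Rightarrow> mpoly4 \<Rightarrow> mpoly4" where
  "shiftS a p = map_poly (\<lambda>q. pcompose q [:[:[:a:]:], 1:]) p"
definition shiftT :: "complex \<Rightarrow> mpoly4 \<Rightarrow> mpoly4" where
  "shiftT a p = pcompose p [:[:[:[:a:]:]:], 1:]"

datatype gca_basis = L int | H int | I int | J int

text \<open>Action of the basis on Omega(lam,eta,sig,0) = C[X,Y], acting on the X,Y variables.\<close>
fun omega_I_act :: "complex \<Rightarrow> complex \<Rightarrow> complex \<Rightarrow> gca_basis \<Rightarrow> mpoly4 \<Rightarrow> mpoly4" where
  "omega_I_act lam eta sig (L m) f =
     cst (lam powi m) * (varY - cst (of_int m) * varX + cst (of_int m * eta)) * shiftY (- of_int m) f"
| "omega_I_act lam eta sig (H m) f = cst (lam powi m) * varX * shiftY (- of_int m) f"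
| "omega_I_act lam eta sig (I m) f = cst (lam powi m * sig) * shiftX (-1) (shiftY (- of_int m) f)"
| "omega_I_act lam eta sig (J m) f = 0"

text \<open>Action of the basis on Omega(lam,eta,0,sig) = C[S,T], acting on the S,T variables.\<close>
fun omega_J_act :: "complex \<Rightarrow> complex \<Rightarrow> complex \<Rightarrow> gca_basis \<Rightarrow> mpoly4 \<Rightarrow> mpoly4" where
  "omega_J_act lam eta sig (L m) f =
     cst (lam powi m) * (varT + cst (of_int m) * varS + cst (of_int m * eta)) * shiftT (- of_int m) f"
| "omega_J_act lam eta sig (H m) f = cst (lam powi m) * varS * shiftT (- of_int m) f"
| "omega_J_act lam eta sig (I m) f = 0"
| "omega_J_act lam eta sig (J m) f = cst (lam powi m * sig) * shiftS 1 (shiftT (- of_int m) f)"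

text \<open>Tensor product Omega(l1,e1,s1,0) (x) Omega(l2,e2,0,s2): x(v (x) w) = xv (x) w + v (x) xw.\<close>
definition tensor_act ::
  "complex \<Rightarrow> complex \<Rightarrow> complex \<Rightarrow> complex \<Rightarrow> complex \<Rightarrow> complex \<Rightarrow> gca_basis \<Rightarrow> mpoly4 \<Rightarrow> mpoly4" where
  "tensor_act l1 e1 s1 l2 e2 s2 x f = omega_I_act l1 e1 s1 x f + omega_J_act l2 e2 s2 x f"

text \<open>Isomorphism of G-modules on the same underlying vector space: a complex-linear
  bijection intertwining the actions of all basis elements (hence of all of G).\<close>
definition module_iso :: "(gca_basis \<Rightarrow> mpoly4 \<Rightarrow> mpoly4) \<Rightarrow> (gca_basis \<Rightarrow> mpoly4 \<Rightarrow> mpoly4) \<Rightarrow> bool" where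
  "module_iso \<rho> \<rho>' \<longleftrightarrow> (\<exists>\<phi>. bij \<phi> \<and>
      (\<forall>f g. \<phi> (f + g) = \<phi> f + \<phi> g) \<and>
      (\<forall>c f. \<phi> (cst c * f) = cst c * \<phi> f) \<and>
      (\<forall>x f. \<phi> (\<rho> x f) = \<rho>' x (\<phi> f)))"

end

theory Submission
  imports Defs
begin

text \<open>An isomorphism \<open>\<phi>\<close> sends \<open>1\<close>, on which \<open>I m\<close> and \<open>J m\<close> act by the scalars
  \<open>\<lambda>\<^sub>1\<^sup>m \<sigma>\<^sub>1\<close> and \<open>\<lambda>\<^sub>2\<^sup>m \<sigma>\<^sub>2\<close>, to a common eigenvector \<open>g\<close> of the primed \<open>I m\<close>, \<open>J m\<close>
  with the same eigenvalues. These operators are scalars times shifts of the variables, and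
  shifts preserve the lexicographic leading coefficient; comparing leading coefficients for
  \<open>m = 0, 1\<close> gives \<open>\<lambda>\<^sub>i' = \<lambda>\<^sub>i\<close>, \<open>\<sigma>\<^sub>i' = \<sigma>\<^sub>i\<close> and makes \<open>g\<close> invariant under nonzero shifts of
  all four variables, so \<open>g\<close> is a nonzero constant. Finally a combination of \<open>L (m - 1)\<close>, \<open>L m\<close>,
  \<open>L (m + 1)\<close> and \<open>H m\<close> maps \<open>1\<close> to the scalar \<open>(\<lambda>\<^sub>1 - \<lambda>\<^sub>2)(\<lambda>\<^sub>1\<^sup>m \<eta>\<^sub>1 - \<lambda>\<^sub>2\<^sup>m \<eta>\<^sub>2)\<close>, which \<open>\<phi>\<close> must preserve;
  \<open>m = 0, 1\<close> then determine \<open>\<eta>\<^sub>1, \<eta>\<^sub>2\<close>.\<close>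

lemma lead_coeff_map_poly_eq:
  assumes "\<And>x. f x = 0 \<longleftrightarrow> x = 0"
  shows "lead_coeff (map_poly f p) = f (lead_coeff p)"
  using assms lead_coeff_map_poly_nz[of f p] by (cases "p = 0") auto

lemma map_poly_eq_0_iff':
  assumes "\<And>x. f x = 0 \<longleftrightarrow> x = 0"
  shows "map_poly f p = 0 \<longleftrightarrow> p = 0"
  using assms by (intro map_poly_eq_0_iff) auto

lemma pcompose_shift_eq_0_iff:
  fixes p :: "'a::{comm_semiring_1,semiring_no_zero_divisors} poly"
  shows "pcompose p [:a, 1:] = 0 \<longleftrightarrow> p = 0"
  using pcompose_eq_0[of p "[:a, 1:]"] by auto

lemma lead_coeff_pcompose_shift:
  fixes p :: "'a::{comm_semiring_1,semiring_no_zero_divisors} poly"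
  shows "lead_coeff (pcompose p [:a, 1:]) = lead_coeff p"
  by (simp add: lead_coeff_comp)

lemma pcompose_shift_shift:
  fixes p :: "'a::comm_semiring_1 poly"
  shows "pcompose (pcompose p [:a, 1:]) [:b, 1:] = pcompose p [:a + b, 1:]"
  by (simp add: pcompose_assoc[symmetric] pcompose_pCons add.commute)

lemma pcompose_shift_invariant_imp_const:
  fixes p :: "'a::{idom,ring_char_0} poly"
  assumes "pcompose p [:a, 1:] = p" "a \<noteq> 0"
  shows "p = [:coeff p 0:]"
proof -
  have "poly p (of_nat n * a) = poly p 0" for n
  proof (induction n)
    case (Suc n)
    then show ?case
      using arg_cong[OF assms(1), of "\<lambda>q. poly q (of_nat n * a)"]
      by (simp add: poly_pcompose algebra_simps)
  qed simp
  then have "range (\<lambda>n. of_nat n * a) \<subseteq> {x. poly (p - [:poly p 0:]) x = 0}"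
    by auto
  moreover have "infinite (range (\<lambda>n::nat. of_nat n * a))"
    using assms(2) by (intro range_inj_infinite injI) simp
  ultimately have "p - [:poly p 0:] = 0"
    using poly_roots_finite finite_subset by blast
  then show ?thesis by (simp add: poly_0_coeff_0)
qed

definition lex_lead_coeff :: "mpoly4 \<Rightarrow> complex" where
  "lex_lead_coeff f = lead_coeff (lead_coeff (lead_coeff (lead_coeff f)))"

lemma lex_lead_coeff_eq_0_iff: "lex_lead_coeff f = 0 \<longleftrightarrow> f = 0"
  by (simp add: lex_lead_coeff_def)

lemma lex_lead_coeff_cst_mult: "lex_lead_coeff (cst c * f) = c * lex_lead_coeff f"
  by (simp add: lex_lead_coeff_def cst_def lead_coeff_mult)

lemma lex_lead_coeff_shiftX: "lex_lead_coeff (shiftX a f) = lex_lead_coeff f"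
  by (simp add: lex_lead_coeff_def shiftX_def lead_coeff_map_poly_eq map_poly_eq_0_iff'
      pcompose_shift_eq_0_iff lead_coeff_pcompose_shift)

lemma lex_lead_coeff_shiftY: "lex_lead_coeff (shiftY a f) = lex_lead_coeff f"
  by (simp add: lex_lead_coeff_def shiftY_def lead_coeff_map_poly_eq map_poly_eq_0_iff'
      pcompose_shift_eq_0_iff lead_coeff_pcompose_shift)

lemma lex_lead_coeff_shiftS: "lex_lead_coeff (shiftS a f) = lex_lead_coeff f"
  by (simp add: lex_lead_coeff_def shiftS_def lead_coeff_map_poly_eq
      pcompose_shift_eq_0_iff lead_coeff_pcompose_shift)

lemma lex_lead_coeff_shiftT: "lex_lead_coeff (shiftT a f) = lex_lead_coeff f"
  by (simp add: lex_lead_coeff_def shiftT_def lead_coeff_pcompose_shift)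

lemma shiftX_shiftX: "shiftX a (shiftX b f) = shiftX (a + b) f"
  by (simp add: shiftX_def map_poly_map_poly o_def pcompose_shift_shift add.commute)

lemma shiftS_shiftS: "shiftS a (shiftS b f) = shiftS (a + b) f"
  by (simp add: shiftS_def map_poly_map_poly o_def pcompose_shift_shift add.commute)

lemma shiftX_0 [simp]: "shiftX 0 f = f"
  by (simp add: shiftX_def map_poly_idI)

lemma shiftY_0 [simp]: "shiftY 0 f = f"
  by (simp add: shiftY_def map_poly_idI)

lemma shiftS_0 [simp]: "shiftS 0 f = f"
  by (simp add: shiftS_def map_poly_idI)

lemma shiftT_0 [simp]: "shiftT 0 f = f"
  by (simp add: shiftT_def)

lemma inj_shiftX: "inj (shiftX a)"
  by (rule inj_on_inverseI[of _ "shiftX (- a)"]) (simp add: shiftX_shiftX)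

lemma inj_shiftS: "inj (shiftS a)"
  by (rule inj_on_inverseI[of _ "shiftS (- a)"]) (simp add: shiftS_shiftS)

lemma cst_add: "cst (a + b) = cst a + cst b"
  and cst_diff: "cst (a - b) = cst a - cst b"
  and cst_mult: "cst (a * b) = cst a * cst b"
  and cst_1: "cst 1 = 1"
  and cst_0: "cst 0 = 0"
  and cst_eq_iff: "cst a = cst b \<longleftrightarrow> a = b"
  by (simp_all add: cst_def one_pCons)

lemma shiftX_cst [simp]: "shiftX a (cst c) = cst c"
  by (simp add: shiftX_def cst_def map_poly_pCons)

lemma shiftY_cst [simp]: "shiftY a (cst c) = cst c"
  by (simp add: shiftY_def cst_def map_poly_pCons)

lemma shiftS_cst [simp]: "shiftS a (cst c) = cst c"
  by (simp add: shiftS_def cst_def map_poly_pCons)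

lemma shiftT_cst [simp]: "shiftT a (cst c) = cst c"
  by (simp add: shiftT_def cst_def)

lemma shift_1 [simp]: "shiftX a 1 = 1" "shiftY a 1 = 1" "shiftS a 1 = 1" "shiftT a 1 = 1"
  using shiftX_cst shiftY_cst shiftS_cst shiftT_cst by (metis cst_1)+

lemma shift_invariant_imp_cst:
  assumes "shiftX a f = f" "shiftY b f = f" "shiftS c f = f" "shiftT d f = f"
    and "a \<noteq> 0" "b \<noteq> 0" "c \<noteq> 0" "d \<noteq> 0"
  obtains k where "f = cst k"
proof -
  have "f = [:coeff f 0:]"
    using assms(4,8) by (intro pcompose_shift_invariant_imp_const[of _ "[:[:[:d:]:]:]"])
      (simp_all add: shiftT_def)
  then obtain f0 where f0: "f = [:f0:]" by blast
  have "f0 = [:coeff f0 0:]"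
    using assms(3,7) unfolding f0
    by (intro pcompose_shift_invariant_imp_const[of _ "[:[:c:]:]"])
      (simp_all add: shiftS_def map_poly_pCons)
  then obtain f1 where f1: "f0 = [:f1:]" by blast
  have "f1 = [:coeff f1 0:]"
    using assms(2,6) unfolding f0 f1
    by (intro pcompose_shift_invariant_imp_const[of _ "[:b:]"])
      (simp_all add: shiftY_def map_poly_pCons)
  then obtain f2 where f2: "f1 = [:f2:]" by blast
  have "f2 = [:coeff f2 0:]"
    using assms(1,5) unfolding f0 f1 f2
    by (intro pcompose_shift_invariant_imp_const[of _ a])
      (simp_all add: shiftX_def map_poly_pCons)
  then show thesis
    using that[of "coeff f2 0"] unfolding f0 f1 f2 cst_def by argo
qed

text \<open>The factor \<open>(z - a)(z - b)\<close> annihilates the sequences \<open>a\<^sup>m\<close> and \<open>b\<^sup>m\<close>, which removes the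
  \<open>Y\<close>- and \<open>T\<close>-parts of \<open>L m 1\<close> for \<open>(a, b) = (\<lambda>\<^sub>1, \<lambda>\<^sub>2)\<close>; the \<open>H m\<close> term cancels what is left of
  the \<open>X\<close>- and \<open>S\<close>-parts, leaving a scalar.\<close>
definition L_H_combination ::
  "(gca_basis \<Rightarrow> mpoly4 \<Rightarrow> mpoly4) \<Rightarrow> complex \<Rightarrow> complex \<Rightarrow> int \<Rightarrow> mpoly4 \<Rightarrow> mpoly4" where
  "L_H_combination \<rho> a b m v = \<rho> (L (m + 1)) v - cst (a + b) * \<rho> (L m) v
     + cst (a * b) * \<rho> (L (m - 1)) v + cst (a - b) * \<rho> (H m) v"

lemma L_H_combination_tensor_act:
  assumes "l1 \<noteq> 0" "l2 \<noteq> 0"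
  shows "L_H_combination (tensor_act l1 e1 s1 l2 e2 s2) l1 l2 m (cst k)
    = cst (k * ((l1 - l2) * (l1 powi m * e1 - l2 powi m * e2)))"
proof -
  have powers: "x powi (m + 1) = x powi (m - 1) * x * x" "x powi m = x powi (m - 1) * x"
    if "x \<noteq> 0" for x :: complex
    using that by (simp_all flip: power_int_add_1 add: mult.assoc)
  show ?thesis
    by (simp add: L_H_combination_def tensor_act_def powers assms cst_add cst_diff cst_mult cst_1)
      (simp add: algebra_simps)
qed

lemma cst_mult_eq_cst_mult_lex_lead_coeffD:
  assumes "cst c' * h = cst c * g" "lex_lead_coeff h = lex_lead_coeff g" "g \<noteq> 0"
  shows "c' = c" and "c \<noteq> 0 \<Longrightarrow> h = g"
proof -
  have "c' * lex_lead_coeff g = c * lex_lead_coeff g"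
    using arg_cong[OF assms(1), of lex_lead_coeff] assms(2) by (simp add: lex_lead_coeff_cst_mult)
  then show "c' = c"
    using assms(3) by (simp add: lex_lead_coeff_eq_0_iff)
  then show "h = g" if "c \<noteq> 0"
    using assms(1) that by (simp add: cst_eq_iff flip: cst_0)
qed

lemma tensor_act_I_eigenvector:
  assumes "\<And>m. tensor_act l1' e1' s1' l2' e2' s2' (I m) g = cst (l1 powi m * s1) * g"
    and "g \<noteq> 0" "l1 \<noteq> 0" "s1 \<noteq> 0"
  shows "l1' = l1" "s1' = s1" "shiftX (-1) g = g" "shiftY (-1) g = g"
proof -
  have "cst s1' * shiftX (-1) g = cst s1 * g"
    using assms(1)[of 0] by (simp add: tensor_act_def)
  from cst_mult_eq_cst_mult_lex_lead_coeffD[OF this lex_lead_coeff_shiftX \<open>g \<noteq> 0\<close>]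
  show "s1' = s1" and X: "shiftX (-1) g = g"
    using assms(4) by auto
  have "cst (l1' * s1') * shiftX (-1) (shiftY (-1) g) = cst (l1 * s1) * g"
    using assms(1)[of 1] by (simp add: tensor_act_def)
  from cst_mult_eq_cst_mult_lex_lead_coeffD[OF this _ \<open>g \<noteq> 0\<close>]
  have "l1' * s1' = l1 * s1" and XY: "shiftX (-1) (shiftY (-1) g) = g"
    using assms(3,4) by (simp_all add: lex_lead_coeff_shiftX lex_lead_coeff_shiftY)
  then show "l1' = l1"
    using \<open>s1' = s1\<close> assms(4) by simp
  show "shiftY (-1) g = g"
    using XY X inj_shiftX by (metis injD)
qed

lemma tensor_act_J_eigenvector:
  assumes "\<And>m. tensor_act l1' e1' s1' l2' e2' s2' (J m) g = cst (l2 powi m * s2) * g"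
    and "g \<noteq> 0" "l2 \<noteq> 0" "s2 \<noteq> 0"
  shows "l2' = l2" "s2' = s2" "shiftS 1 g = g" "shiftT (-1) g = g"
proof -
  have "cst s2' * shiftS 1 g = cst s2 * g"
    using assms(1)[of 0] by (simp add: tensor_act_def)
  from cst_mult_eq_cst_mult_lex_lead_coeffD[OF this lex_lead_coeff_shiftS \<open>g \<noteq> 0\<close>]
  show "s2' = s2" and S: "shiftS 1 g = g"
    using assms(4) by auto
  have "cst (l2' * s2') * shiftS 1 (shiftT (-1) g) = cst (l2 * s2) * g"
    using assms(1)[of 1] by (simp add: tensor_act_def)
  from cst_mult_eq_cst_mult_lex_lead_coeffD[OF this _ \<open>g \<noteq> 0\<close>]
  have "l2' * s2' = l2 * s2" and ST: "shiftS 1 (shiftT (-1) g) = g"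
    using assms(3,4) by (simp_all add: lex_lead_coeff_shiftS lex_lead_coeff_shiftT)
  then show "l2' = l2"
    using \<open>s2' = s2\<close> assms(4) by simp
  show "shiftT (-1) g = g"
    using ST S inj_shiftS by (metis injD)
qed

locale intertwiner =
  fixes \<phi> :: "mpoly4 \<Rightarrow> mpoly4" and \<rho> \<rho>' :: "gca_basis \<Rightarrow> mpoly4 \<Rightarrow> mpoly4"
  assumes additive: "\<phi> (f + g) = \<phi> f + \<phi> g"
    and homogeneous: "\<phi> (cst c * f) = cst c * \<phi> f"
    and intertwines: "\<phi> (\<rho> x f) = \<rho>' x (\<phi> f)"
begin

lemma image_diff: "\<phi> (f - g) = \<phi> f - \<phi> g"
  using additive[of "f - g" g] by simp

lemma image_cst: "\<phi> (cst c) = cst c * \<phi> 1"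
  using homogeneous[of c 1] by simp

lemma image_L_H_combination: "\<phi> (L_H_combination \<rho> a b m v) = L_H_combination \<rho>' a b m (\<phi> v)"
  by (simp add: L_H_combination_def additive image_diff homogeneous intertwines)

end

lemma module_iso_iff_intertwiner: "module_iso \<rho> \<rho>' \<longleftrightarrow> (\<exists>\<phi>. bij \<phi> \<and> intertwiner \<phi> \<rho> \<rho>')"
  by (simp add: module_iso_def intertwiner_def)

lemma intertwiner_tensor_act_params_eq:
  assumes "intertwiner \<phi> (tensor_act l1 e1 s1 l2 e2 s2) (tensor_act l1' e1' s1' l2' e2' s2')"
    and "\<phi> 1 \<noteq> 0" "l1 \<noteq> 0" "l2 \<noteq> 0" "s1 \<noteq> 0" "s2 \<noteq> 0" "l1 \<noteq> l2"
  shows "(l1, e1, s1) = (l1', e1', s1') \<and> (l2, e2, s2) = (l2', e2', s2')"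
proof -
  interpret intertwiner \<phi> "tensor_act l1 e1 s1 l2 e2 s2" "tensor_act l1' e1' s1' l2' e2' s2'"
    by fact
  have "tensor_act l1' e1' s1' l2' e2' s2' (I m) (\<phi> 1) = cst (l1 powi m * s1) * \<phi> 1" for m
    using intertwines[of "I m" 1] image_cst by (simp add: tensor_act_def)
  from tensor_act_I_eigenvector[OF this assms(2,3,5)]
  have "l1' = l1" "s1' = s1" and X: "shiftX (-1) (\<phi> 1) = \<phi> 1" and Y: "shiftY (-1) (\<phi> 1) = \<phi> 1"
    by auto
  have "tensor_act l1' e1' s1' l2' e2' s2' (J m) (\<phi> 1) = cst (l2 powi m * s2) * \<phi> 1" for m
    using intertwines[of "J m" 1] image_cst by (simp add: tensor_act_def)
  from tensor_act_J_eigenvector[OF this assms(2,4,6)]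
  have "l2' = l2" "s2' = s2" and S: "shiftS 1 (\<phi> 1) = \<phi> 1" and T: "shiftT (-1) (\<phi> 1) = \<phi> 1"
    by auto
  obtain k where k: "\<phi> 1 = cst k"
    using shift_invariant_imp_cst[OF X Y S T] by auto
  with assms(2) have "k \<noteq> 0"
    by (auto simp: cst_0)
  have "(l1 - l2) * (l1 powi m * e1 - l2 powi m * e2) = (l1 - l2) * (l1 powi m * e1' - l2 powi m * e2')"
    for m
    using image_L_H_combination[of l1 l2 m "cst 1"] \<open>k \<noteq> 0\<close>
    by (simp add: L_H_combination_tensor_act assms(3,4) \<open>l1' = l1\<close> \<open>l2' = l2\<close> image_cst k
        cst_eq_iff flip: cst_mult)
  from this[of 0] this[of 1] assms(7)
  have "e1 - e2 = e1' - e2'" "l1 * e1 - l2 * e2 = l1 * e1' - l2 * e2'"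
    by simp_all
  then have "(l1 - l2) * e1 = (l1 - l2) * e1'"
    by algebra
  then have "e1 = e1'" "e2 = e2'"
    using \<open>e1 - e2 = e1' - e2'\<close> assms(7) by simp_all
  with \<open>l1' = l1\<close> \<open>s1' = s1\<close> \<open>l2' = l2\<close> \<open>s2' = s2\<close> show ?thesis
    by simp
qed

theorem theorem3p5:
  fixes l1 l2 l1' l2' s1 s2 s1' s2' e1 e2 e1' e2' :: complex
  assumes "l1 \<noteq> 0" "l2 \<noteq> 0" "l1' \<noteq> 0" "l2' \<noteq> 0"
    and "s1 \<noteq> 0" "s2 \<noteq> 0" "s1' \<noteq> 0" "s2' \<noteq> 0"
    and "l1 \<noteq> l2" "l1' \<noteq> l2'"
  shows "module_iso (tensor_act l1 e1 s1 l2 e2 s2) (tensor_act l1' e1' s1' l2' e2' s2')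
    \<longleftrightarrow> (l1, e1, s1) = (l1', e1', s1') \<and> (l2, e2, s2) = (l2', e2', s2')"
proof
  assume "module_iso (tensor_act l1 e1 s1 l2 e2 s2) (tensor_act l1' e1' s1' l2' e2' s2')"
  then obtain \<phi> where "bij \<phi>"
    and \<phi>: "intertwiner \<phi> (tensor_act l1 e1 s1 l2 e2 s2) (tensor_act l1' e1' s1' l2' e2' s2')"
    by (auto simp: module_iso_iff_intertwiner)
  have "\<phi> 1 \<noteq> 0"
    using bij_is_inj[OF \<open>bij \<phi>\<close>] intertwiner.image_diff[OF \<phi>, of 0 0]
    by (metis diff_self injD one_neq_zero)
  show "(l1, e1, s1) = (l1', e1', s1') \<and> (l2, e2, s2) = (l2', e2', s2')"
    using intertwiner_tensor_act_params_eq[OF \<phi> \<open>\<phi> 1 \<noteq> 0\<close>] assms by simp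
next
  assume "(l1, e1, s1) = (l1', e1', s1') \<and> (l2, e2, s2) = (l2', e2', s2')"
  then show "module_iso (tensor_act l1 e1 s1 l2 e2 s2) (tensor_act l1' e1' s1' l2' e2' s2')"
    by (auto simp: module_iso_iff_intertwiner intertwiner_def intro!: exI[of _ id])
qed

end
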